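(* Let $\Omega\subseteq S^{n-1}$ be a closed set not contained in any closed hemisphere of $S^{n-1}$, let $\Psi\in\mathcal C_I\cup\mathcal C_d$, $f\in C^+(\Omega)$, $g\in C(\Omega)$, and for $|\varepsilon|$ sufficiently small let $f_\varepsilon\in C^+(\Omega)$ be defined by $\Psi(\xi,f_\varepsilon(\xi))=\Psi(\xi,f(\xi))+\varepsilon g(\xi)$, $\xi\in\Omega$. (i) For $v\in S^{n-1}\setminus\eta_{\langle f\rangle}$, letting $u_0=\alpha_{\langle f\rangle^*}(v)$, $$\lim_{\varepsilon\to0}\frac{\log h_{\langle f_\varepsilon\rangle}(v)-\log h_{\langle f\rangle}(v)}{\varepsilon}=\frac{g(u_0)}{f(u_0)\Psi_t(u_0,f(u_0))}.$$ (ii) For $\xi\in S^{n-1}\setminus\eta_{\langle 1/f\rangle}$, letting $u_1=\alpha_{[f]}(\xi)$, $$\lim_{\varepsilon\to0}\frac{\log\rho_{[f_\varepsilon]}(\xi)-\log\rho_{[f]}(\xi)}{\varepsilon}=\frac{g(u_1)}{f(u_1)\Psi_t(u_1,f(u_1))}.$$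
   Context: $S^{n-1}$ is the unit sphere of $\mathbb R^n$, $n\ge2$. $\mathscr K^n_{(o)}$ is the set of compact convex sets in $\mathbb R^n$ with the origin in their interior. For $K\in\mathscr K^n_{(o)}$: $h_K(x)=\max\{x\cdot y:y\in K\}$, $\rho_K(x)=\max\{t\ge0:tx\in K\}$, $K^*=\{x:x\cdot y\le1\ \forall y\in K\}$. $\eta_K$ is the set of $u\in S^{n-1}$ for which $\{x\in\partial K:x\cdot u=h_K(u)\}$ contains two or more points. For $\xi\in S^{n-1}$, $\pmb\alpha_K(\xi)$ is the set of outer unit normals of $K$ at $\rho_K(\xi)\xi$; for $v\notin\eta_K$ the set $\pmb\alpha_{K^*}(v)$ is a singleton, written $\{\alpha_{K^*}(v)\}$ (and, in particular, $\alpha_{\langle f\rangle^*}(v)$ for $v\notin\eta_{\langle f\rangle}$, $\alpha_{[f]}(\xi)$ for $\xi\notin\eta_{\langle1/f\rangle}$, noting $[f]=\langle 1/f\rangle^*$, are well-defined and lie in $\Omega$). $\mathcal C$ is the set of $G:S^{n-1}\times(0,\infty)\to\mathbb R$ with $G$ and $G_t=\partial G/\partial t$ continuous; $\mathcal C_I=\{G\in\mathcal C:G_t>0\}$, $\mathcal C_d=\{G\in\mathcal C:G_t<0\}$. $C(\Omega)$: continuous functions on $\Omega$; $C^+(\Omega)$: strictly positive ones. For $f\in C^+(\Omega)$: $[f]=\bigcap_{\xi\in\Omega}\{x:x\cdot\xi\le f(\xi)\}$ and $\langle f\rangle=\mathrm{conv}\{f(\xi)\xi:\xi\in\Omega\}$.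 *)

theory Defs
  imports "HOL-Analysis.Analysis"
begin

definition supp_fun :: "'a::euclidean_space set \<Rightarrow> 'a \<Rightarrow> real" where
  "supp_fun K x = Sup ((\<lambda>y. x \<bullet> y) ` K)"

definition radial_fun :: "'a::euclidean_space set \<Rightarrow> 'a \<Rightarrow> real" where
  "radial_fun K x = Sup {t. t \<ge> 0 \<and> t *\<^sub>R x \<in> K}"

definition polar :: "'a::euclidean_space set \<Rightarrow> 'a set" where
  "polar K = {x. \<forall>y\<in>K. x \<bullet> y \<le> 1}"

definition eta :: "'a::euclidean_space set \<Rightarrow> 'a set" where
  "eta K = {u \<in> sphere 0 1. \<exists>x y. x \<noteq> y \<and>
      x \<in> frontier K \<and> x \<bullet> u = supp_fun K u \<and>
      y \<in> frontier K \<and> y \<bullet> u = supp_fun K u}"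

definition radial_gauss :: "'a::euclidean_space set \<Rightarrow> 'a \<Rightarrow> 'a set" where
  "radial_gauss K \<xi> = {u \<in> sphere 0 1.
      u \<bullet> (radial_fun K \<xi> *\<^sub>R \<xi>) = supp_fun K u}"

definition radial_gauss1 :: "'a::euclidean_space set \<Rightarrow> 'a \<Rightarrow> 'a" where
  "radial_gauss1 K \<xi> = (THE u. u \<in> radial_gauss K \<xi>)"

definition wulff :: "'a::euclidean_space set \<Rightarrow> ('a \<Rightarrow> real) \<Rightarrow> 'a set" where
  "wulff \<Omega> f = (\<Inter>\<xi>\<in>\<Omega>. {x. x \<bullet> \<xi> \<le> f \<xi>})"

definition conv_hull_fun :: "'a::euclidean_space set \<Rightarrow> ('a \<Rightarrow> real) \<Rightarrow> 'a set" where
  "conv_hull_fun \<Omega> f = convex hull ((\<lambda>\<xi>. f \<xi> *\<^sub>R \<xi>) ` \<Omega>)"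

definition deriv_t :: "('a \<Rightarrow> real \<Rightarrow> real) \<Rightarrow> 'a \<Rightarrow> real \<Rightarrow> real" where
  "deriv_t G \<xi> t = deriv (G \<xi>) t"

definition class_C :: "('a::euclidean_space \<Rightarrow> real \<Rightarrow> real) \<Rightarrow> bool" where
  "class_C G \<longleftrightarrow>
     continuous_on (sphere 0 1 \<times> {0<..}) (\<lambda>(\<xi>, t). G \<xi> t) \<and>
     (\<forall>\<xi>\<in>sphere 0 1. \<forall>t>0. G \<xi> differentiable (at t)) \<and>
     continuous_on (sphere 0 1 \<times> {0<..}) (\<lambda>(\<xi>, t). deriv_t G \<xi> t)"

definition class_C_I :: "('a::euclidean_space \<Rightarrow> real \<Rightarrow> real) \<Rightarrow> bool" where
  "class_C_I G \<longleftrightarrow> class_C G \<and> (\<forall>\<xi>\<in>sphere 0 1. \<forall>t>0. deriv_t G \<xi> t > 0)"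

definition class_C_d :: "('a::euclidean_space \<Rightarrow> real \<Rightarrow> real) \<Rightarrow> bool" where
  "class_C_d G \<longleftrightarrow> class_C G \<and> (\<forall>\<xi>\<in>sphere 0 1. \<forall>t>0. deriv_t G \<xi> t < 0)"

end

theory Submission
  imports Defs
begin

text \<open>The implicit equation \<Psi>(\<xi>, f_\<epsilon>(\<xi>)) = \<Psi>(\<xi>, f(\<xi>)) + \<epsilon> g(\<xi>) and the mean value
  theorem give a uniform first-order expansion f_\<epsilon> = f + \<epsilon> b + o(\<epsilon>) on \<Omega>, with
  b = g / \<Psi>_t(-, f). The support function of <f> is h(v) = max over \<xi> \<in> \<Omega> of f(\<xi>) (\<xi> \<bullet> v);
  for v outside \<eta>_<f> this maximum is attained at a single point u0, which is also the unique
  outer normal of <f>* in direction v. Danskin's theorem then gives the derivative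
  b(u0) (u0 \<bullet> v) of h_\<epsilon>(v) at \<epsilon> = 0, and dividing by h(v) = f(u0) (u0 \<bullet> v) yields (i).
  Since [f] = <1/f>* and \<rho>_[f] = 1 / h_<1/f>, part (ii) is part (i) applied to the expansion
  1/f_\<epsilon> = 1/f - \<epsilon> b / f^2 + o(\<epsilon>).\<close>

section \<open>Support functions and polar bodies\<close>

lemma bdd_above_inner_image:
  fixes K :: "'a::euclidean_space set"
  assumes "bounded K"
  shows "bdd_above ((\<lambda>y. v \<bullet> y) ` K)"
  by (intro bounded_imp_bdd_above bounded_linear_image assms bounded_linear_inner_right)

lemma supp_fun_upper:
  assumes "bdd_above ((\<lambda>y. v \<bullet> y) ` K)" "y \<in> K"
  shows "v \<bullet> y \<le> supp_fun K v"
  unfolding supp_fun_def using assms by (intro cSup_upper) auto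

lemma supp_fun_least:
  assumes "K \<noteq> {}" "\<And>y. y \<in> K \<Longrightarrow> v \<bullet> y \<le> c"
  shows "supp_fun K v \<le> c"
  unfolding supp_fun_def using assms by (intro cSup_least) auto

lemma supp_fun_convex_hull:
  fixes P :: "'a::euclidean_space set"
  assumes "P \<noteq> {}" "bdd_above ((\<lambda>y. v \<bullet> y) ` P)"
  shows "supp_fun (convex hull P) v = supp_fun P v"
proof (rule antisym)
  have hull_le: "convex hull P \<subseteq> {y. v \<bullet> y \<le> supp_fun P v}"
    by (rule hull_minimal) (auto simp: convex_halfspace_le intro: supp_fun_upper[OF assms(2)])
  then show "supp_fun (convex hull P) v \<le> supp_fun P v"
    using assms(1) by (intro supp_fun_least) auto
  have "bdd_above ((\<lambda>y. v \<bullet> y) ` (convex hull P))"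
    using hull_le by (intro bdd_aboveI2) auto
  then show "supp_fun P v \<le> supp_fun (convex hull P) v"
    unfolding supp_fun_def using assms(1) hull_subset[of P convex]
    by (intro cSup_subset_mono) auto
qed

lemma supp_fun_conv_hull_fun:
  fixes \<Omega> :: "'a::euclidean_space set"
  assumes "compact \<Omega>" "\<Omega> \<noteq> {}" "continuous_on \<Omega> F"
  shows "supp_fun (conv_hull_fun \<Omega> F) v = Sup ((\<lambda>\<zeta>. F \<zeta> * (v \<bullet> \<zeta>)) ` \<Omega>)"
proof -
  have "compact ((\<lambda>\<zeta>. F \<zeta> *\<^sub>R \<zeta>) ` \<Omega>)"
    by (intro compact_continuous_image continuous_intros assms)
  then have "supp_fun (conv_hull_fun \<Omega> F) v = supp_fun ((\<lambda>\<zeta>. F \<zeta> *\<^sub>R \<zeta>) ` \<Omega>) v"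
    unfolding conv_hull_fun_def using assms(2)
    by (intro supp_fun_convex_hull bdd_above_inner_image compact_imp_bounded) auto
  then show ?thesis
    by (simp add: supp_fun_def image_image)
qed

lemma supp_fun_lipschitz:
  fixes K :: "'a::euclidean_space set"
  assumes "K \<noteq> {}" "K \<subseteq> cball 0 C"
  shows "C-lipschitz_on UNIV (supp_fun K)"
proof (rule lipschitz_onI)
  have bdd: "bdd_above ((\<lambda>y. w \<bullet> y) ` K)" for w
    using assms(2) by (intro bdd_above_inner_image bounded_subset[OF bounded_cball])
  have le: "supp_fun K w \<le> supp_fun K w' + C * dist w w'" for w w'
  proof (rule supp_fun_least[OF assms(1)])
    fix y assume y: "y \<in> K"
    have "(w - w') \<bullet> y \<le> norm (w - w') * norm y"
      by (rule norm_cauchy_schwarz)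
    also have "\<dots> \<le> norm (w - w') * C"
      using y assms(2) by (intro mult_left_mono) auto
    finally show "w \<bullet> y \<le> supp_fun K w' + C * dist w w'"
      using supp_fun_upper[OF bdd y, of w'] by (simp add: inner_diff_left dist_norm algebra_simps)
  qed
  show "dist (supp_fun K w) (supp_fun K w') \<le> C * dist w w'" for w w'
    using le[of w w'] le[of w' w] by (simp add: dist_real_def dist_commute abs_le_iff)
  show "0 \<le> C"
    using assms by auto
qed

lemma support_point_in_frontier:
  fixes K :: "'a::euclidean_space set"
  assumes "closed K" "bdd_above ((\<lambda>y. v \<bullet> y) ` K)" "v \<noteq> 0"
    and "y \<in> K" "v \<bullet> y = supp_fun K v"
  shows "y \<in> frontier K"
proof -
  have "y \<notin> interior K"
  proof
    assume "y \<in> interior K"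
    then obtain e where e: "e > 0" "ball y e \<subseteq> K"
      using mem_interior by blast
    define z where "z = y + (e / 2 / norm v) *\<^sub>R v"
    have "z \<in> K"
      using e assms(3) by (auto simp: z_def dist_norm intro!: subsetD[OF e(2)])
    then have "v \<bullet> z \<le> v \<bullet> y"
      using supp_fun_upper[OF assms(2)] assms(5) by simp
    moreover have "v \<bullet> z = v \<bullet> y + e / 2 * norm v"
      using assms(3) by (simp add: z_def inner_add_right power2_eq_square flip: power2_norm_eq_inner)
    moreover have "0 < e / 2 * norm v"
      using e assms(3) by simp
    ultimately show False
      by linarith
  qed
  then show ?thesis
    using assms(1,4) by (simp add: frontier_def)
qed

lemma support_point_unique:
  fixes K :: "'a::euclidean_space set"
  assumes "closed K" "bdd_above ((\<lambda>y. v \<bullet> y) ` K)" "v \<in> sphere 0 1 - eta K"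
    and "y \<in> K" "v \<bullet> y = supp_fun K v" "y' \<in> K" "v \<bullet> y' = supp_fun K v"
  shows "y = y'"
proof (rule ccontr)
  assume "y \<noteq> y'"
  have "v \<noteq> 0"
    using assms(3) by auto
  then have "y \<in> frontier K" "y' \<in> frontier K"
    using support_point_in_frontier[OF assms(1,2)] assms(4-7) by auto
  moreover have "y \<bullet> v = supp_fun K v" "y' \<bullet> v = supp_fun K v"
    using assms(5,7) by (simp_all add: inner_commute)
  ultimately have "v \<in> eta K"
    using assms(3) \<open>y \<noteq> y'\<close> unfolding eta_def by blast
  with assms(3) show False
    by blast
qed

lemma polar_convex_hull: "polar (convex hull P) = polar P"
proof
  show "polar (convex hull P) \<subseteq> polar P"
    unfolding polar_def using hull_subset[of P convex] by blast
  show "polar P \<subseteq> polar (convex hull P)"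
  proof
    fix x assume "x \<in> polar P"
    then have "convex hull P \<subseteq> {y. x \<bullet> y \<le> 1}"
      by (intro hull_minimal) (auto simp: polar_def convex_halfspace_le)
    then show "x \<in> polar (convex hull P)"
      by (auto simp: polar_def)
  qed
qed

lemma wulff_eq_polar_conv_hull_fun:
  assumes "\<forall>\<zeta>\<in>\<Omega>. 0 < f \<zeta>"
  shows "wulff \<Omega> f = polar (conv_hull_fun \<Omega> (\<lambda>\<zeta>. 1 / f \<zeta>))"
  unfolding conv_hull_fun_def polar_convex_hull
  using assms by (auto simp: wulff_def polar_def divide_simps inner_commute)

lemma polar_polar_subset:
  fixes K :: "'a::euclidean_space set"
  assumes "closed K" "convex K" "0 \<in> K"
  shows "polar (polar K) \<subseteq> K"
proof
  fix y assume y: "y \<in> polar (polar K)"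
  show "y \<in> K"
  proof (rule ccontr)
    assume "y \<notin> K"
    then obtain a b where ab: "a \<bullet> y < b" "\<forall>x\<in>K. b < a \<bullet> x"
      using separating_hyperplane_closed_point assms(1,2) by blast
    then have "b < 0"
      using assms(3) by force
    then have "(1 / b) *\<^sub>R a \<in> polar K"
      using ab(2) by (auto simp: polar_def field_simps less_imp_le)
    then have "y \<bullet> ((1 / b) *\<^sub>R a) \<le> 1"
      using y unfolding polar_def by blast
    with ab(1) \<open>b < 0\<close> show False
      by (simp add: field_simps inner_commute)
  qed
qed

lemma radial_fun_polar:
  assumes "bdd_above ((\<lambda>y. v \<bullet> y) ` K)" "K \<noteq> {}" "0 < supp_fun K v"
  shows "radial_fun (polar K) v = 1 / supp_fun K v"
proof -
  let ?h = "supp_fun K v"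
  have "t *\<^sub>R v \<in> polar K \<longleftrightarrow> t \<le> 1 / ?h" if "0 \<le> t" for t
  proof
    assume t: "t *\<^sub>R v \<in> polar K"
    show "t \<le> 1 / ?h"
    proof (cases "t = 0")
      case False
      then have "?h \<le> 1 / t"
        using t that assms(2) by (intro supp_fun_least) (auto simp: polar_def field_simps)
      then show ?thesis
        using that False assms(3) by (simp add: field_simps)
    qed (use assms(3) in simp)
  next
    assume t: "t \<le> 1 / ?h"
    have "t * (v \<bullet> y) \<le> 1" if "y \<in> K" for y
    proof -
      have "t * (v \<bullet> y) \<le> t * ?h"
        using supp_fun_upper[OF assms(1) that] \<open>0 \<le> t\<close> by (rule mult_left_mono)
      also have "\<dots> \<le> 1"
        using t assms(3) by (simp add: field_simps)
      finally show ?thesis .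
    qed
    then show "t *\<^sub>R v \<in> polar K"
      by (simp add: polar_def)
  qed
  then have "{t. 0 \<le> t \<and> t *\<^sub>R v \<in> polar K} = {0..1 / ?h}"
    by auto
  then show ?thesis
    using assms(3) by (simp add: radial_fun_def)
qed

lemma normalized_support_point_in_radial_gauss_polar:
  fixes K :: "'a::euclidean_space set"
  assumes K: "compact K" "0 \<in> K" and v: "0 < supp_fun K v"
    and y0: "y0 \<in> K" "v \<bullet> y0 = supp_fun K v"
  shows "y0 /\<^sub>R norm y0 \<in> radial_gauss (polar K) v"
proof -
  define h where "h = supp_fun K v"
  have bdd: "bdd_above ((\<lambda>y. v \<bullet> y) ` K)"
    using K(1) by (intro bdd_above_inner_image compact_imp_bounded)
  have radial: "radial_fun (polar K) v = 1 / h"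
    unfolding h_def using K(2) v by (intro radial_fun_polar bdd) auto
  have "y0 \<noteq> 0"
    using y0(2) v by auto
  have p_polar: "(1 / h) *\<^sub>R v \<in> polar K"
    using supp_fun_upper[OF bdd] v by (auto simp: polar_def h_def field_simps)
  define u0 where "u0 = y0 /\<^sub>R norm y0"
  have "supp_fun (polar K) u0 = 1 / norm y0"
    unfolding supp_fun_def
  proof (rule cSup_eq_maximum)
    show "1 / norm y0 \<in> (\<lambda>x. u0 \<bullet> x) ` polar K"
      using p_polar y0(2) v by (intro image_eqI[of _ _ "(1 / h) *\<^sub>R v"])
        (auto simp: h_def u0_def inner_commute divide_inverse)
    show "r \<le> 1 / norm y0" if "r \<in> (\<lambda>x. u0 \<bullet> x) ` polar K" for r
      using that y0(1) \<open>y0 \<noteq> 0\<close> by (auto simp: polar_def u0_def divide_simps inner_commute)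
  qed
  then show ?thesis
    using radial y0(2) v \<open>y0 \<noteq> 0\<close>
    by (simp add: radial_gauss_def h_def u0_def inner_commute divide_inverse)
qed

text \<open>Any outer normal u of K* at its boundary point v / h_K(v) rescales to the point
  u / h_K*(u) of K** = K, which supports K in direction v.\<close>
lemma radial_gauss_polar_unique:
  fixes K :: "'a::euclidean_space set"
  assumes K: "compact K" "convex K" "0 \<in> K" and bounded_polar: "bounded (polar K)"
    and v: "0 < supp_fun K v"
    and unique: "\<And>y. y \<in> K \<Longrightarrow> v \<bullet> y = supp_fun K v \<Longrightarrow> y = y0"
    and u: "u \<in> radial_gauss (polar K) v"
  shows "u = y0 /\<^sub>R norm y0"
proof -
  define h where "h = supp_fun K v"
  define s where "s = supp_fun (polar K) u"
  have bdd_polar: "bdd_above ((\<lambda>x. w \<bullet> x) ` polar K)" for w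
    using bounded_polar by (rule bdd_above_inner_image)
  have "radial_fun (polar K) v = 1 / h"
    unfolding h_def using K(1,3) v by (intro radial_fun_polar bdd_above_inner_image compact_imp_bounded) auto
  then have "norm u = 1" and us: "u \<bullet> ((1 / h) *\<^sub>R v) = s"
    using u by (auto simp: radial_gauss_def s_def)
  obtain C where C: "0 < C" "K \<subseteq> cball 0 C"
    using compact_imp_bounded[OF K(1)] by (auto simp: bounded_pos subset_iff)
  have "u \<bullet> y \<le> C" if "y \<in> K" for y
    using norm_cauchy_schwarz[of u y] \<open>norm u = 1\<close> C that by auto
  then have "(1 / C) *\<^sub>R u \<in> polar K"
    using C(1) by (auto simp: polar_def field_simps)
  then have "u \<bullet> ((1 / C) *\<^sub>R u) \<le> s"
    unfolding s_def by (rule supp_fun_upper[OF bdd_polar])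
  then have "1 / C \<le> s"
    using \<open>norm u = 1\<close> by (simp add: inner_commute flip: power2_norm_eq_inner)
  then have "0 < s"
    using C(1) by (meson divide_pos_pos order_less_le_trans zero_less_one)
  have "(1 / s) *\<^sub>R u \<in> polar (polar K)"
    using supp_fun_upper[OF bdd_polar] \<open>0 < s\<close> by (auto simp: polar_def s_def field_simps)
  then have "(1 / s) *\<^sub>R u \<in> K"
    using polar_polar_subset[OF compact_imp_closed[OF K(1)] K(2,3)] by blast
  moreover have "v \<bullet> ((1 / s) *\<^sub>R u) = h"
    using us \<open>0 < s\<close> v by (simp add: h_def field_simps inner_commute)
  ultimately have "(1 / s) *\<^sub>R u = y0"
    using unique by (simp add: h_def)
  then have "u = s *\<^sub>R y0"
    using \<open>0 < s\<close> by auto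
  then show ?thesis
    using \<open>norm u = 1\<close> \<open>0 < s\<close> by (auto simp: divide_simps)
qed

section \<open>Convex hulls of radial graphs over a spanning subset of the sphere\<close>

locale hull_generator =
  fixes \<Omega> :: "'a::euclidean_space set" and F :: "'a \<Rightarrow> real"
  assumes on_sphere: "\<Omega> \<subseteq> sphere 0 1" and compact: "compact \<Omega>"
    and not_in_hemisphere: "\<forall>u\<in>sphere 0 1. \<not> \<Omega> \<subseteq> {x. x \<bullet> u \<ge> 0}"
    and continuous: "continuous_on \<Omega> F" and positive: "\<forall>\<zeta>\<in>\<Omega>. 0 < F \<zeta>"
begin

lemma exists_positive_inner:
  assumes "w \<noteq> 0"
  obtains \<zeta> where "\<zeta> \<in> \<Omega>" "0 < w \<bullet> \<zeta>"
proof -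
  define u where "u = - w /\<^sub>R norm w"
  have "u \<in> sphere 0 1"
    using assms by (auto simp: u_def)
  then have "\<not> \<Omega> \<subseteq> {x. x \<bullet> u \<ge> 0}"
    using not_in_hemisphere by blast
  then obtain \<zeta> where "\<zeta> \<in> \<Omega>" "\<zeta> \<bullet> u < 0"
    by (metis (mono_tags) mem_Collect_eq not_le subsetI)
  moreover from this(2) have "0 < w \<bullet> \<zeta>"
    using assms by (simp add: u_def inner_commute zero_less_mult_iff)
  ultimately show ?thesis
    using that by blast
qed

lemma nonempty: "\<Omega> \<noteq> {}"
proof -
  obtain b :: 'a where "b \<in> Basis"
    using nonempty_Basis by blast
  then have "b \<noteq> 0"
    by auto
  then show ?thesis
    using exists_positive_inner by blast
qed

lemma generator_in_hull: "\<zeta> \<in> \<Omega> \<Longrightarrow> F \<zeta> *\<^sub>R \<zeta> \<in> conv_hull_fun \<Omega> F"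
  unfolding conv_hull_fun_def by (intro hull_inc) auto

lemma compact_hull: "compact (conv_hull_fun \<Omega> F)"
  unfolding conv_hull_fun_def
  by (intro compact_convex_hull compact_continuous_image continuous_intros compact continuous)

lemma convex_hull: "convex (conv_hull_fun \<Omega> F)"
  by (simp add: conv_hull_fun_def convex_convex_hull)

lemma bdd_above_inner_hull: "bdd_above ((\<lambda>y. v \<bullet> y) ` conv_hull_fun \<Omega> F)"
  by (intro bdd_above_inner_image compact_imp_bounded compact_hull)

lemma supp_fun_hull: "supp_fun (conv_hull_fun \<Omega> F) v = Sup ((\<lambda>\<zeta>. F \<zeta> * (v \<bullet> \<zeta>)) ` \<Omega>)"
  by (rule supp_fun_conv_hull_fun[OF compact nonempty continuous])

lemma supp_fun_hull_attained:
  obtains u where "u \<in> \<Omega>" "supp_fun (conv_hull_fun \<Omega> F) v = F u * (v \<bullet> u)"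
proof -
  have "continuous_on \<Omega> (\<lambda>\<zeta>. F \<zeta> * (v \<bullet> \<zeta>))"
    by (intro continuous_intros continuous)
  then obtain u where "u \<in> \<Omega>" "\<forall>\<zeta>\<in>\<Omega>. F \<zeta> * (v \<bullet> \<zeta>) \<le> F u * (v \<bullet> u)"
    using continuous_attains_sup[OF compact nonempty] by blast
  then have "Sup ((\<lambda>\<zeta>. F \<zeta> * (v \<bullet> \<zeta>)) ` \<Omega>) = F u * (v \<bullet> u)"
    by (intro cSup_eq_maximum) auto
  then show ?thesis
    using that \<open>u \<in> \<Omega>\<close> by (simp add: supp_fun_hull)
qed

lemma supp_fun_hull_ge: "\<zeta> \<in> \<Omega> \<Longrightarrow> F \<zeta> * (v \<bullet> \<zeta>) \<le> supp_fun (conv_hull_fun \<Omega> F) v"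
  using supp_fun_upper[OF bdd_above_inner_hull generator_in_hull] by simp

lemma supp_fun_hull_pos:
  assumes "v \<noteq> 0"
  shows "0 < supp_fun (conv_hull_fun \<Omega> F) v"
proof -
  obtain \<zeta> where "\<zeta> \<in> \<Omega>" "0 < v \<bullet> \<zeta>"
    using exists_positive_inner[OF assms] .
  then have "0 < F \<zeta> * (v \<bullet> \<zeta>)"
    using positive by simp
  with supp_fun_hull_ge[OF \<open>\<zeta> \<in> \<Omega>\<close>, of v] show ?thesis
    by linarith
qed

lemma zero_in_hull: "0 \<in> conv_hull_fun \<Omega> F"
proof (rule ccontr)
  assume "0 \<notin> conv_hull_fun \<Omega> F"
  then obtain a b where "0 < b" "\<forall>x\<in>conv_hull_fun \<Omega> F. b < a \<bullet> x"
    using separating_hyperplane_closed_0 convex_hull compact_imp_closed[OF compact_hull] by blast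
  have "0 < a \<bullet> \<zeta>" if "\<zeta> \<in> \<Omega>" for \<zeta>
  proof -
    have "0 < F \<zeta> * (a \<bullet> \<zeta>)"
      using \<open>0 < b\<close> \<open>\<forall>x\<in>_. b < a \<bullet> x\<close> generator_in_hull[OF that] by fastforce
    then show ?thesis
      by (meson positive that zero_less_mult_pos)
  qed
  moreover obtain \<zeta> where "\<zeta> \<in> \<Omega>" "0 < (- a) \<bullet> \<zeta>"
  proof (rule exists_positive_inner)
    show "- a \<noteq> 0"
      using calculation nonempty by fastforce
  qed
  ultimately show False
    by force
qed

lemma bounded_polar_hull: "bounded (polar (conv_hull_fun \<Omega> F))"
proof -
  obtain C where "conv_hull_fun \<Omega> F \<subseteq> cball 0 C"
    using compact_imp_bounded[OF compact_hull] by (auto simp: bounded_iff subset_iff)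
  then have "continuous_on (sphere 0 1) (supp_fun (conv_hull_fun \<Omega> F))"
    using generator_in_hull nonempty
    by (intro lipschitz_on_continuous_on[OF lipschitz_on_subset[OF supp_fun_lipschitz]]) auto
  moreover have "sphere (0::'a) 1 \<noteq> {}"
    by (simp add: sphere_eq_empty)
  ultimately obtain w0 where w0: "w0 \<in> sphere 0 1"
    "\<forall>w\<in>sphere 0 1. supp_fun (conv_hull_fun \<Omega> F) w0 \<le> supp_fun (conv_hull_fun \<Omega> F) w"
    using continuous_attains_inf[OF compact_sphere] by blast
  define m where "m = supp_fun (conv_hull_fun \<Omega> F) w0"
  have "0 < m"
    unfolding m_def using w0(1) by (intro supp_fun_hull_pos) auto
  have "norm x \<le> 1 / m" if x: "x \<in> polar (conv_hull_fun \<Omega> F)" and "x \<noteq> 0" for x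
  proof -
    have "supp_fun (conv_hull_fun \<Omega> F) (x /\<^sub>R norm x) \<le> 1 / norm x"
      using x \<open>x \<noteq> 0\<close> generator_in_hull nonempty
      by (intro supp_fun_least) (auto simp: polar_def divide_simps)
    moreover have "m \<le> supp_fun (conv_hull_fun \<Omega> F) (x /\<^sub>R norm x)"
      using w0(2) \<open>x \<noteq> 0\<close> unfolding m_def by simp
    ultimately have "m \<le> 1 / norm x"
      by linarith
    then show ?thesis
      using \<open>0 < m\<close> \<open>x \<noteq> 0\<close> by (simp add: field_simps)
  qed
  then have "\<forall>x\<in>polar (conv_hull_fun \<Omega> F). norm x \<le> 1 / m"
    using \<open>0 < m\<close> by (metis norm_zero divide_pos_pos zero_less_one less_imp_le)
  then show ?thesis
    unfolding bounded_iff by blast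
qed

lemma radial_fun_polar_hull:
  assumes "v \<noteq> 0"
  shows "radial_fun (polar (conv_hull_fun \<Omega> F)) v = 1 / supp_fun (conv_hull_fun \<Omega> F) v"
  using generator_in_hull nonempty
  by (intro radial_fun_polar bdd_above_inner_hull supp_fun_hull_pos assms) auto

context
  fixes v u
  assumes v: "v \<in> sphere 0 1 - eta (conv_hull_fun \<Omega> F)"
    and u: "u \<in> \<Omega>" "supp_fun (conv_hull_fun \<Omega> F) v = F u * (v \<bullet> u)"
begin

lemma unique_support_point:
  assumes "y \<in> conv_hull_fun \<Omega> F" "v \<bullet> y = supp_fun (conv_hull_fun \<Omega> F) v"
  shows "y = F u *\<^sub>R u"
  using support_point_unique[OF compact_imp_closed[OF compact_hull] bdd_above_inner_hull v]
    assms generator_in_hull[OF u(1)] u(2) by simp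

lemma strict_maximizer:
  assumes "\<zeta> \<in> \<Omega>" "\<zeta> \<noteq> u"
  shows "F \<zeta> * (v \<bullet> \<zeta>) < F u * (v \<bullet> u)"
proof (rule ccontr)
  assume "\<not> ?thesis"
  then have "F \<zeta> * (v \<bullet> \<zeta>) = F u * (v \<bullet> u)"
    using supp_fun_hull_ge[OF assms(1), of v] u(2) by linarith
  then have "v \<bullet> (F \<zeta> *\<^sub>R \<zeta>) = supp_fun (conv_hull_fun \<Omega> F) v"
    using u(2) by simp
  then have eq: "F \<zeta> *\<^sub>R \<zeta> = F u *\<^sub>R u"
    using unique_support_point generator_in_hull[OF assms(1)] by blast
  moreover have "norm \<zeta> = 1" "norm u = 1"
    using assms(1) u(1) on_sphere by auto
  then have "norm (F \<zeta> *\<^sub>R \<zeta>) = F \<zeta>" "norm (F u *\<^sub>R u) = F u"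
    using assms(1) u(1) positive by auto
  ultimately have "F \<zeta> = F u"
    by metis
  then show False
    using eq assms positive by auto
qed

lemma radial_gauss1_polar_hull: "radial_gauss1 (polar (conv_hull_fun \<Omega> F)) v = u"
  unfolding radial_gauss1_def
proof (rule the_equality)
  have "v \<noteq> 0"
    using v by auto
  have normalized: "(F u *\<^sub>R u) /\<^sub>R norm (F u *\<^sub>R u) = u"
    using u(1) on_sphere positive by (auto simp: subset_iff)
  then show "u \<in> radial_gauss (polar (conv_hull_fun \<Omega> F)) v"
    using normalized_support_point_in_radial_gauss_polar[OF compact_hull zero_in_hull
        supp_fun_hull_pos[OF \<open>v \<noteq> 0\<close>] generator_in_hull[OF u(1)]] u(2)
    by simp
  show "u' = u" if "u' \<in> radial_gauss (polar (conv_hull_fun \<Omega> F)) v" for u'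
    using radial_gauss_polar_unique[OF compact_hull convex_hull zero_in_hull bounded_polar_hull
        supp_fun_hull_pos[OF \<open>v \<noteq> 0\<close>] unique_support_point that] normalized by simp
qed

end

end

section \<open>First variation of a maximum\<close>

lemma tendsto_ln_diff_quotient:
  fixes S :: "real \<Rightarrow> real"
  assumes "0 < H" and lim: "((\<lambda>\<epsilon>. (S \<epsilon> - H) / \<epsilon>) \<longlongrightarrow> c) (at 0)"
  shows "((\<lambda>\<epsilon>. (ln (S \<epsilon>) - ln H) / \<epsilon>) \<longlongrightarrow> c / H) (at 0)"
proof -
  define S0 where "S0 \<epsilon> = (if \<epsilon> = 0 then H else S \<epsilon>)" for \<epsilon>
  have nonzero: "\<forall>\<^sub>F \<epsilon> in at (0::real). \<epsilon> \<noteq> 0"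
    by (simp add: eventually_at_filter)
  have "((\<lambda>\<epsilon>. (S0 \<epsilon> - S0 0) / (\<epsilon> - 0)) \<longlongrightarrow> c) (at 0)"
    by (rule Lim_transform_eventually[OF lim]) (use nonzero in \<open>eventually_elim, simp add: S0_def\<close>)
  then have "(S0 has_real_derivative c) (at 0)"
    by (simp add: has_field_derivative_iff)
  moreover have "(ln has_real_derivative inverse H) (at (S0 0))"
    using \<open>0 < H\<close> by (simp add: S0_def DERIV_ln)
  ultimately have "((\<lambda>\<epsilon>. ln (S0 \<epsilon>)) has_real_derivative inverse H * c) (at 0)"
    using DERIV_chain2 by blast
  then have "((\<lambda>\<epsilon>. (ln (S0 \<epsilon>) - ln (S0 0)) / (\<epsilon> - 0)) \<longlongrightarrow> c / H) (at 0)"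
    by (simp add: has_field_derivative_iff field_simps)
  then show ?thesis
    by (rule Lim_transform_eventually) (use nonzero in \<open>eventually_elim, simp add: S0_def\<close>)
qed

lemma compact_strict_maximum_gap:
  fixes \<phi> :: "'a::metric_space \<Rightarrow> real"
  assumes "compact S" "continuous_on S \<phi>" "u \<in> S"
    and max: "\<And>x. x \<in> S \<Longrightarrow> x \<noteq> u \<Longrightarrow> \<phi> x < \<phi> u" and "0 < r"
  obtains \<gamma> where "0 < \<gamma>" "\<And>x. x \<in> S \<Longrightarrow> r \<le> dist x u \<Longrightarrow> \<phi> x \<le> \<phi> u - \<gamma>"
proof (cases "S - ball u r = {}")
  case True
  show ?thesis
  proof (rule that[of 1])
    fix x assume "x \<in> S" "r \<le> dist x u"
    with True show "\<phi> x \<le> \<phi> u - 1"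
      by (auto simp: dist_commute)
  qed simp
next
  case False
  have "compact (S - ball u r)"
    using assms(1) by (intro compact_diff open_ball)
  moreover have "continuous_on (S - ball u r) \<phi>"
    using assms(2) by (rule continuous_on_subset) auto
  ultimately obtain x0 where x0: "x0 \<in> S - ball u r" "\<forall>x\<in>S - ball u r. \<phi> x \<le> \<phi> x0"
    using continuous_attains_sup[OF _ False] by blast
  have "x0 \<noteq> u"
    using x0(1) \<open>0 < r\<close> by auto
  then show ?thesis
    using that[of "\<phi> u - \<phi> x0"] max x0 by (auto simp: dist_commute)
qed

lemma Sup_perturbation_estimate:
  fixes \<phi> \<phi>' \<psi> :: "'a::metric_space \<Rightarrow> real"
  assumes u: "u \<in> S" and max: "\<And>x. x \<in> S \<Longrightarrow> \<phi> x \<le> \<phi> u"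
    and near: "\<And>x. x \<in> S \<Longrightarrow> dist x u < \<rho> \<Longrightarrow> \<bar>\<psi> x - \<psi> u\<bar> \<le> \<eta>"
    and far: "\<And>x. x \<in> S \<Longrightarrow> \<rho> \<le> dist x u \<Longrightarrow> \<phi> x \<le> \<phi> u - \<gamma>"
    and bound: "\<And>x. x \<in> S \<Longrightarrow> \<bar>\<psi> x\<bar> \<le> K" and small: "\<bar>\<epsilon>\<bar> * (2 * K + \<eta>) \<le> \<gamma>"
    and expand: "\<And>x. x \<in> S \<Longrightarrow> \<bar>\<phi>' x - \<phi> x - \<epsilon> * \<psi> x\<bar> \<le> \<eta> * \<bar>\<epsilon>\<bar>"
  shows "\<bar>Sup (\<phi>' ` S) - \<phi> u - \<epsilon> * \<psi> u\<bar> \<le> 2 * \<eta> * \<bar>\<epsilon>\<bar>"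
proof -
  have upper: "\<phi>' x \<le> \<phi> u + \<epsilon> * \<psi> u + 2 * \<eta> * \<bar>\<epsilon>\<bar>" if "x \<in> S" for x
  proof (cases "dist x u < \<rho>")
    case True
    have "\<epsilon> * \<psi> x \<le> \<epsilon> * \<psi> u + \<bar>\<epsilon>\<bar> * \<bar>\<psi> x - \<psi> u\<bar>"
      by (simp add: abs_mult[symmetric] right_diff_distrib abs_le_iff)
    moreover have "\<bar>\<epsilon>\<bar> * \<bar>\<psi> x - \<psi> u\<bar> \<le> \<eta> * \<bar>\<epsilon>\<bar>"
      using mult_left_mono[OF near[OF that True], of "\<bar>\<epsilon>\<bar>"] by (simp add: mult.commute)
    moreover have "\<phi>' x - \<phi> x - \<epsilon> * \<psi> x \<le> \<eta> * \<bar>\<epsilon>\<bar>"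
      using expand[OF that] by (simp add: abs_le_iff)
    ultimately show ?thesis
      using max[OF that] by linarith
  next
    case False
    have "\<bar>\<epsilon> * \<psi> x\<bar> \<le> \<bar>\<epsilon>\<bar> * K" "\<bar>\<epsilon> * \<psi> u\<bar> \<le> \<bar>\<epsilon>\<bar> * K"
      using bound that u by (auto simp: abs_mult intro: mult_left_mono)
    then show ?thesis
      using expand[OF that] expand[OF u] far[OF that] False small
      by (simp add: abs_le_iff algebra_simps)
  qed
  have "\<phi>' u \<le> Sup (\<phi>' ` S)"
    using u upper by (intro cSup_upper bdd_aboveI2) auto
  then have "\<phi> u + \<epsilon> * \<psi> u - \<eta> * \<bar>\<epsilon>\<bar> \<le> Sup (\<phi>' ` S)"
    using expand[OF u] by (simp add: abs_le_iff)
  moreover have "Sup (\<phi>' ` S) \<le> \<phi> u + \<epsilon> * \<psi> u + 2 * \<eta> * \<bar>\<epsilon>\<bar>"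
    using upper u by (intro cSup_least) auto
  moreover have "0 \<le> \<eta> * \<bar>\<epsilon>\<bar>"
    using expand[OF u] by linarith
  ultimately show ?thesis
    by (simp add: abs_le_iff)
qed

lemma tendsto_Sup_diff_quotient:
  fixes \<phi> \<psi> :: "'a::metric_space \<Rightarrow> real" and \<phi>e :: "real \<Rightarrow> 'a \<Rightarrow> real"
  assumes S: "compact S" and cont: "continuous_on S \<phi>" "continuous_on S \<psi>"
    and u: "u \<in> S" and max: "\<And>x. x \<in> S \<Longrightarrow> x \<noteq> u \<Longrightarrow> \<phi> x < \<phi> u"
    and lim: "uniform_limit S (\<lambda>\<epsilon> x. (\<phi>e \<epsilon> x - \<phi> x) / \<epsilon>) \<psi> (at 0)"
  shows "((\<lambda>\<epsilon>. (Sup (\<phi>e \<epsilon> ` S) - \<phi> u) / \<epsilon>) \<longlongrightarrow> \<psi> u) (at 0)"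
proof (rule tendstoI)
  fix r :: real assume "0 < r"
  define \<eta> where "\<eta> = r / 3"
  have "0 < \<eta>"
    using \<open>0 < r\<close> by (simp add: \<eta>_def)
  obtain K where K: "\<And>x. x \<in> S \<Longrightarrow> \<bar>\<psi> x\<bar> \<le> K"
    using compact_imp_bounded[OF compact_continuous_image[OF cont(2) S]]
    by (auto simp: bounded_real)
  obtain \<rho> where "0 < \<rho>" and near: "\<And>x. x \<in> S \<Longrightarrow> dist x u < \<rho> \<Longrightarrow> \<bar>\<psi> x - \<psi> u\<bar> \<le> \<eta>"
    using cont(2) u \<open>0 < \<eta>\<close> unfolding continuous_on_iff by (metis dist_real_def less_imp_le)
  obtain \<gamma> where "0 < \<gamma>" and far: "\<And>x. x \<in> S \<Longrightarrow> \<rho> \<le> dist x u \<Longrightarrow> \<phi> x \<le> \<phi> u - \<gamma>"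
    using compact_strict_maximum_gap[OF S cont(1) u max \<open>0 < \<rho>\<close>] by blast
  have "\<forall>\<^sub>F \<epsilon> in at 0. \<epsilon> \<noteq> 0 \<and> \<bar>\<epsilon>\<bar> * (2 * K + \<eta>) < \<gamma> \<and>
      (\<forall>x\<in>S. \<bar>(\<phi>e \<epsilon> x - \<phi> x) / \<epsilon> - \<psi> x\<bar> < \<eta>)"
  proof (intro eventually_conj)
    show "\<forall>\<^sub>F \<epsilon> in at (0::real). \<epsilon> \<noteq> 0"
      by (simp add: eventually_at_filter)
    have "((\<lambda>\<epsilon>. \<bar>\<epsilon>\<bar> * (2 * K + \<eta>)) \<longlongrightarrow> 0) (at (0::real))"
      by (auto intro!: tendsto_eq_intros)
    then show "\<forall>\<^sub>F \<epsilon> in at 0. \<bar>\<epsilon>\<bar> * (2 * K + \<eta>) < \<gamma>"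
      using \<open>0 < \<gamma>\<close> by (rule order_tendstoD)
    show "\<forall>\<^sub>F \<epsilon> in at 0. \<forall>x\<in>S. \<bar>(\<phi>e \<epsilon> x - \<phi> x) / \<epsilon> - \<psi> x\<bar> < \<eta>"
      using uniform_limitD[OF lim \<open>0 < \<eta>\<close>] by (simp add: dist_real_def)
  qed
  then show "\<forall>\<^sub>F \<epsilon> in at 0. dist ((Sup (\<phi>e \<epsilon> ` S) - \<phi> u) / \<epsilon>) (\<psi> u) < r"
  proof eventually_elim
    case (elim \<epsilon>)
    have "\<bar>\<phi>e \<epsilon> x - \<phi> x - \<epsilon> * \<psi> x\<bar> \<le> \<eta> * \<bar>\<epsilon>\<bar>" if "x \<in> S" for x
    proof -
      have "\<phi>e \<epsilon> x - \<phi> x - \<epsilon> * \<psi> x = \<epsilon> * ((\<phi>e \<epsilon> x - \<phi> x) / \<epsilon> - \<psi> x)"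
        using elim by (simp add: field_simps)
      then show ?thesis
        using elim that by (simp add: abs_mult mult.commute mult_left_mono less_imp_le)
    qed
    moreover have "\<phi> x \<le> \<phi> u" if "x \<in> S" for x
      using max[OF that] by (cases "x = u") (auto simp: less_imp_le)
    ultimately have "\<bar>Sup (\<phi>e \<epsilon> ` S) - \<phi> u - \<epsilon> * \<psi> u\<bar> \<le> 2 * \<eta> * \<bar>\<epsilon>\<bar>"
      using elim
      by (intro Sup_perturbation_estimate[where \<phi> = \<phi> and \<psi> = \<psi> and \<phi>' = "\<phi>e \<epsilon>", OF u _ near far K])
        auto
    moreover have "(Sup (\<phi>e \<epsilon> ` S) - \<phi> u) / \<epsilon> - \<psi> u = (Sup (\<phi>e \<epsilon> ` S) - \<phi> u - \<epsilon> * \<psi> u) / \<epsilon>"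
      using elim by (simp add: field_simps)
    ultimately have "\<bar>(Sup (\<phi>e \<epsilon> ` S) - \<phi> u) / \<epsilon> - \<psi> u\<bar> \<le> 2 * \<eta>"
      using elim by (simp add: abs_divide divide_le_eq)
    then show ?case
      using \<open>0 < r\<close> by (simp add: dist_real_def \<eta>_def)
  qed
qed

lemma uniform_limit_of_diff_quotient:
  fixes Fe :: "real \<Rightarrow> 'a \<Rightarrow> real"
  assumes lim: "uniform_limit S (\<lambda>\<epsilon> x. (Fe \<epsilon> x - F x) / \<epsilon>) B (at 0)" and "bounded (B ` S)"
  shows "uniform_limit S Fe F (at 0)"
proof -
  have "uniform_limit S (\<lambda>\<epsilon> x. \<epsilon>) (\<lambda>x. 0) (at (0::real))"
    unfolding uniform_limit_iff using tendsto_ident_at[of "0::real" UNIV]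
    by (auto simp: tendsto_iff elim!: eventually_mono)
  then have "uniform_limit S (\<lambda>\<epsilon> x. F x + \<epsilon> * ((Fe \<epsilon> x - F x) / \<epsilon>)) (\<lambda>x. F x + 0 * B x) (at 0)"
    using assms by (intro uniform_limit_add uniform_limit_const uniform_lim_mult) (auto simp: image_constant_conv)
  moreover have "\<forall>\<^sub>F \<epsilon> in at (0::real). \<forall>x\<in>S. F x + \<epsilon> * ((Fe \<epsilon> x - F x) / \<epsilon>) = Fe \<epsilon> x"
    by (simp add: eventually_at_filter)
  ultimately show ?thesis
    by (simp add: uniform_limit_cong)
qed

lemma uniform_limit_inverse_diff_quotient:
  fixes Fe :: "real \<Rightarrow> 'a \<Rightarrow> real"
  assumes lim: "uniform_limit S (\<lambda>\<epsilon> x. (Fe \<epsilon> x - F x) / \<epsilon>) B (at 0)"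
    and bounded: "bounded (B ` S)" "bounded (F ` S)"
    and lower: "0 < m" "\<And>x. x \<in> S \<Longrightarrow> m \<le> \<bar>F x\<bar>"
  shows "uniform_limit S (\<lambda>\<epsilon> x. (1 / Fe \<epsilon> x - 1 / F x) / \<epsilon>) (\<lambda>x. - B x / (F x)\<^sup>2) (at 0)"
proof -
  have Fe: "uniform_limit S Fe F (at 0)"
    by (rule uniform_limit_of_diff_quotient[OF lim bounded(1)])
  have "uniform_limit S (\<lambda>\<epsilon> x. Fe \<epsilon> x * F x) (\<lambda>x. F x * F x) (at 0)"
    using bounded(2) by (intro uniform_lim_mult Fe uniform_limit_const) auto
  moreover have "uniform_limit S (\<lambda>\<epsilon> x. - ((Fe \<epsilon> x - F x) / \<epsilon>)) (\<lambda>x. - B x) (at 0)"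
    by (intro uniform_limit_intros lim)
  moreover have "bounded ((\<lambda>x. - B x) ` S)"
    using bounded(1) bounded_uminus[of "B ` S"] by (simp add: image_image)
  moreover have "m * m \<le> norm (F x * F x)" if "x \<in> S" for x
    using mult_mono[OF lower(2)[OF that] lower(2)[OF that]] lower(1) by (simp add: abs_mult)
  ultimately have "uniform_limit S (\<lambda>\<epsilon> x. - ((Fe \<epsilon> x - F x) / \<epsilon>) / (Fe \<epsilon> x * F x))
      (\<lambda>x. - B x / (F x * F x)) (at 0)"
    using lower(1) by (intro uniform_lim_divide[where b = "m * m"]) auto
  moreover have "\<forall>\<^sub>F \<epsilon> in at 0. \<forall>x\<in>S. dist (Fe \<epsilon> x) (F x) < m"
    using uniform_limitD[OF Fe lower(1)] .
  then have "\<forall>\<^sub>F \<epsilon> in at 0. \<forall>x\<in>S.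
      - ((Fe \<epsilon> x - F x) / \<epsilon>) / (Fe \<epsilon> x * F x) = (1 / Fe \<epsilon> x - 1 / F x) / \<epsilon>"
  proof eventually_elim
    case (elim \<epsilon>)
    show ?case
    proof
      fix x assume "x \<in> S"
      then have "F x \<noteq> 0" "Fe \<epsilon> x \<noteq> 0"
        using elim lower(2)[of x] by (auto simp: dist_real_def)
      then show "- ((Fe \<epsilon> x - F x) / \<epsilon>) / (Fe \<epsilon> x * F x) = (1 / Fe \<epsilon> x - 1 / F x) / \<epsilon>"
        by (simp add: divide_simps)
    qed
  qed
  ultimately show ?thesis
    by (simp add: uniform_limit_cong power2_eq_square)
qed

section \<open>First variation of the solution of the implicit equation\<close>

lemma mean_value_between:
  fixes \<phi> \<phi>' :: "real \<Rightarrow> real"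
  assumes "\<And>t. min a x \<le> t \<Longrightarrow> t \<le> max a x \<Longrightarrow> (\<phi> has_real_derivative \<phi>' t) (at t)"
  shows "\<exists>z. \<bar>z - a\<bar> \<le> \<bar>x - a\<bar> \<and> \<phi> x - \<phi> a = (x - a) * \<phi>' z"
proof (cases a x rule: linorder_cases)
  case less
  then obtain z where "a < z" "z < x" "\<phi> x - \<phi> a = (x - a) * \<phi>' z"
    using MVT2[of a x \<phi> \<phi>'] assms by auto
  then show ?thesis
    by (intro exI[of _ z]) auto
next
  case greater
  then obtain z where "x < z" "z < a" "\<phi> a - \<phi> x = (a - x) * \<phi>' z"
    using MVT2[of x a \<phi> \<phi>'] assms by auto
  then show ?thesis
    by (intro exI[of _ z]) (auto simp: algebra_simps)
qed auto

lemma increasing_abs_diff_ge: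
  fixes \<phi> \<phi>' :: "real \<Rightarrow> real"
  assumes deriv: "\<And>t. 0 < t \<Longrightarrow> (\<phi> has_real_derivative \<phi>' t) (at t)"
    and nonneg: "\<And>t. 0 < t \<Longrightarrow> 0 \<le> \<phi>' t"
    and lower: "\<And>t. \<bar>t - a\<bar> \<le> d \<Longrightarrow> c \<le> \<phi>' t"
    and "0 < d" "d < a" "0 < x" "d \<le> \<bar>x - a\<bar>"
  shows "c * d \<le> \<bar>\<phi> x - \<phi> a\<bar>"
proof -
  have step: "c * d \<le> \<bar>\<phi> b - \<phi> a\<bar>" if b: "\<bar>b - a\<bar> = d" for b
  proof -
    have "0 < min a b"
      using b \<open>d < a\<close> by (auto simp: abs_if split: if_splits)
    then have "\<exists>z. \<bar>z - a\<bar> \<le> \<bar>b - a\<bar> \<and> \<phi> b - \<phi> a = (b - a) * \<phi>' z"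
      by (intro mean_value_between deriv) linarith
    then obtain z where "\<bar>z - a\<bar> \<le> d" "\<phi> b - \<phi> a = (b - a) * \<phi>' z"
      by (metis b)
    moreover have "c \<le> \<phi>' z"
      using lower calculation(1) .
    ultimately show ?thesis
      using b \<open>0 < d\<close> by (simp add: abs_mult mult.commute mult_left_mono)
  qed
  have mono: "\<phi> s \<le> \<phi> t" if "0 < s" "s \<le> t" for s t
  proof (rule DERIV_nonneg_imp_nondecreasing[OF \<open>s \<le> t\<close>])
    fix y assume "s \<le> y" "y \<le> t"
    then have "0 < y"
      using \<open>0 < s\<close> by linarith
    then show "\<exists>D. (\<phi> has_real_derivative D) (at y) \<and> 0 \<le> D"
      using deriv nonneg by blast
  qed
  show ?thesis
  proof (cases "a \<le> x")
    case True
    then have "\<phi> (a + d) \<le> \<phi> x" "\<phi> a \<le> \<phi> (a + d)"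
      using \<open>d \<le> \<bar>x - a\<bar>\<close> \<open>0 < d\<close> \<open>d < a\<close> by (auto intro: mono)
    then show ?thesis
      using step[of "a + d"] \<open>0 < d\<close> by auto
  next
    case False
    then have "\<phi> x \<le> \<phi> (a - d)" "\<phi> (a - d) \<le> \<phi> a"
      using \<open>d \<le> \<bar>x - a\<bar>\<close> \<open>0 < d\<close> \<open>d < a\<close> \<open>0 < x\<close> by (auto intro: mono)
    then show ?thesis
      using step[of "a - d"] \<open>0 < d\<close> by auto
  qed
qed

lemma monotone_abs_diff_ge:
  fixes \<phi> \<phi>' :: "real \<Rightarrow> real"
  assumes deriv: "\<And>t. 0 < t \<Longrightarrow> (\<phi> has_real_derivative \<phi>' t) (at t)"
    and sign: "(\<forall>t>0. 0 \<le> \<phi>' t) \<or> (\<forall>t>0. \<phi>' t \<le> 0)"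
    and lower: "\<And>t. \<bar>t - a\<bar> \<le> d \<Longrightarrow> c \<le> \<bar>\<phi>' t\<bar>"
    and "0 < d" "d < a" "0 < x" "d \<le> \<bar>x - a\<bar>"
  shows "c * d \<le> \<bar>\<phi> x - \<phi> a\<bar>"
  using sign
proof
  assume "\<forall>t>0. 0 \<le> \<phi>' t"
  then show ?thesis
    using lower assms(4-) by (intro increasing_abs_diff_ge[OF deriv]) (auto simp: abs_of_nonneg)
next
  assume nonpos: "\<forall>t>0. \<phi>' t \<le> 0"
  have "c * d \<le> \<bar>- \<phi> x - - \<phi> a\<bar>"
  proof (rule increasing_abs_diff_ge[of "\<lambda>t. - \<phi> t" "\<lambda>t. - \<phi>' t"])
    show "c \<le> - \<phi>' t" if "\<bar>t - a\<bar> \<le> d" for t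
      using lower[OF that] nonpos that assms(4,5) by (auto simp: abs_of_nonpos)
  qed (use deriv nonpos assms(4-) in \<open>auto intro: DERIV_minus\<close>)
  then show ?thesis
    by (simp add: abs_minus_commute)
qed

lemma class_C_has_real_derivative:
  assumes "class_C \<Psi>" "\<xi> \<in> sphere 0 1" "0 < t"
  shows "(\<Psi> \<xi> has_real_derivative deriv_t \<Psi> \<xi> t) (at t)"
  using assms unfolding class_C_def deriv_t_def
  by (simp add: DERIV_deriv_iff_real_differentiable)

lemma continuous_on_deriv_t_graph:
  assumes "class_C \<Psi>" "\<Omega> \<subseteq> sphere 0 1" "continuous_on \<Omega> f" "\<forall>\<xi>\<in>\<Omega>. 0 < f \<xi>"
  shows "continuous_on \<Omega> (\<lambda>\<xi>. deriv_t \<Psi> \<xi> (f \<xi>))"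
proof -
  have "continuous_on \<Omega> (\<lambda>\<xi>. (\<lambda>(\<xi>, t). deriv_t \<Psi> \<xi> t) (\<xi>, f \<xi>))"
    by (rule continuous_on_compose2[of "sphere 0 1 \<times> {0<..}"])
      (use assms in \<open>auto simp: class_C_def intro!: continuous_intros\<close>)
  then show ?thesis
    by simp
qed

lemma deriv_t_bounded_away_from_zero:
  assumes "class_C \<Psi>" "compact T" "T \<subseteq> sphere 0 1 \<times> {0<..}"
    and nonzero: "\<And>\<xi> t. \<xi> \<in> sphere 0 1 \<Longrightarrow> 0 < t \<Longrightarrow> deriv_t \<Psi> \<xi> t \<noteq> 0"
  obtains c where "0 < c" "\<And>\<xi> t. (\<xi>, t) \<in> T \<Longrightarrow> c \<le> \<bar>deriv_t \<Psi> \<xi> t\<bar>"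
proof (cases "T = {}")
  case False
  have "continuous_on T (\<lambda>(\<xi>, t). \<bar>deriv_t \<Psi> \<xi> t\<bar>)"
    using continuous_on_subset[OF _ assms(3)] assms(1)
    by (auto simp: class_C_def case_prod_unfold intro!: continuous_intros)
  then obtain \<xi>0 t0 where p: "(\<xi>0, t0) \<in> T"
    "\<forall>(\<xi>, t)\<in>T. \<bar>deriv_t \<Psi> \<xi>0 t0\<bar> \<le> \<bar>deriv_t \<Psi> \<xi> t\<bar>"
    using continuous_attains_inf[OF assms(2) False] by fastforce
  have "0 < \<bar>deriv_t \<Psi> \<xi>0 t0\<bar>"
    using nonzero p(1) assms(3) by auto
  with p(2) show ?thesis
    using that by blast
qed (use that[of 1] in auto)

locale implicit_perturbation =
  fixes \<Omega> :: "'a::euclidean_space set" and \<Psi> :: "'a \<Rightarrow> real \<Rightarrow> real"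
    and f g :: "'a \<Rightarrow> real" and fe :: "real \<Rightarrow> 'a \<Rightarrow> real"
  assumes monotone: "class_C_I \<Psi> \<or> class_C_d \<Psi>"
    and on_sphere: "\<Omega> \<subseteq> sphere 0 1" and compact: "compact \<Omega>"
    and f_continuous: "continuous_on \<Omega> f" and f_positive: "\<forall>\<xi>\<in>\<Omega>. 0 < f \<xi>"
    and g_continuous: "continuous_on \<Omega> g"
    and solves: "\<forall>\<^sub>F \<epsilon> in at 0. \<forall>\<xi>\<in>\<Omega>. 0 < fe \<epsilon> \<xi> \<and> \<Psi> \<xi> (fe \<epsilon> \<xi>) = \<Psi> \<xi> (f \<xi>) + \<epsilon> * g \<xi>"
begin

lemma class_C: "class_C \<Psi>"
  using monotone by (auto simp: class_C_I_def class_C_d_def)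

lemma deriv_t_sign:
  assumes "\<xi> \<in> sphere 0 1"
  shows "(\<forall>t>0. 0 \<le> deriv_t \<Psi> \<xi> t) \<or> (\<forall>t>0. deriv_t \<Psi> \<xi> t \<le> 0)"
  using monotone assms by (auto simp: class_C_I_def class_C_d_def less_imp_le)

lemma deriv_t_nonzero: "\<xi> \<in> sphere 0 1 \<Longrightarrow> 0 < t \<Longrightarrow> deriv_t \<Psi> \<xi> t \<noteq> 0"
  using monotone by (force simp: class_C_I_def class_C_d_def)

lemma continuous_on_first_variation: "continuous_on \<Omega> (\<lambda>\<xi>. g \<xi> / deriv_t \<Psi> \<xi> (f \<xi>))"
  using on_sphere f_positive deriv_t_nonzero
  by (intro continuous_intros continuous_on_deriv_t_graph class_C g_continuous f_continuous)
    (auto simp: subset_iff)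

lemma graph_neighbourhood:
  obtains r T where "0 < r" "compact T" "T \<subseteq> sphere 0 1 \<times> {0<..}"
    "\<And>\<xi> t. \<xi> \<in> \<Omega> \<Longrightarrow> \<bar>t - f \<xi>\<bar> \<le> r \<Longrightarrow> (\<xi>, t) \<in> T"
proof (cases "\<Omega> = {}")
  case False
  obtain \<xi>m where "\<xi>m \<in> \<Omega>" "\<forall>\<xi>\<in>\<Omega>. f \<xi>m \<le> f \<xi>"
    using continuous_attains_inf[OF compact False f_continuous] by blast
  moreover obtain \<xi>M where "\<forall>\<xi>\<in>\<Omega>. f \<xi> \<le> f \<xi>M"
    using continuous_attains_sup[OF compact False f_continuous] by blast
  moreover have "0 < f \<xi>m"
    using f_positive calculation(1) by blast
  ultimately show ?thesis
  proof (intro that[of "f \<xi>m / 2" "\<Omega> \<times> {f \<xi>m / 2 .. f \<xi>M + f \<xi>m / 2}"])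
    show "compact (\<Omega> \<times> {f \<xi>m / 2 .. f \<xi>M + f \<xi>m / 2})"
      by (intro compact_Times compact compact_Icc)
    show "\<Omega> \<times> {f \<xi>m / 2 .. f \<xi>M + f \<xi>m / 2} \<subseteq> sphere 0 1 \<times> {0<..}"
      using on_sphere \<open>0 < f \<xi>m\<close> by auto
    show "(\<xi>, t) \<in> \<Omega> \<times> {f \<xi>m / 2 .. f \<xi>M + f \<xi>m / 2}"
      if "\<xi> \<in> \<Omega>" "\<bar>t - f \<xi>\<bar> \<le> f \<xi>m / 2" for \<xi> t
    proof -
      have "f \<xi>m \<le> f \<xi>" "f \<xi> \<le> f \<xi>M"
        using that(1) \<open>\<forall>\<xi>\<in>\<Omega>. f \<xi>m \<le> f \<xi>\<close> \<open>\<forall>\<xi>\<in>\<Omega>. f \<xi> \<le> f \<xi>M\<close> by auto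
      moreover have "t - f \<xi> \<le> f \<xi>m / 2" "f \<xi> - t \<le> f \<xi>m / 2"
        using abs_le_D1[OF that(2)] abs_le_D2[OF that(2)] by simp_all
      ultimately show ?thesis
        using that(1) by simp
    qed
  qed simp
qed (use that[of 1 "{}"] in auto)

lemma solution_close:
  assumes "\<xi> \<in> sphere 0 1" "0 < x" "0 < d" "d < a"
    and lower: "\<And>t. \<bar>t - a\<bar> \<le> d \<Longrightarrow> c \<le> \<bar>deriv_t \<Psi> \<xi> t\<bar>"
    and close: "\<bar>\<Psi> \<xi> x - \<Psi> \<xi> a\<bar> < c * d"
  shows "\<bar>x - a\<bar> < d"
proof (rule ccontr)
  assume "\<not> ?thesis"
  then have "c * d \<le> \<bar>\<Psi> \<xi> x - \<Psi> \<xi> a\<bar>"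
    using assms(2-4) lower
    by (intro monotone_abs_diff_ge[OF class_C_has_real_derivative[OF class_C assms(1)]
          deriv_t_sign[OF assms(1)]]) auto
  with close show False
    by linarith
qed

lemma uniform_limit_solution: "uniform_limit \<Omega> fe f (at 0)"
proof (rule uniform_limitI)
  fix e :: real assume "0 < e"
  obtain r T where "0 < r" and T: "compact T" "T \<subseteq> sphere 0 1 \<times> {0<..}"
    and graph: "\<And>\<xi> t. \<xi> \<in> \<Omega> \<Longrightarrow> \<bar>t - f \<xi>\<bar> \<le> r \<Longrightarrow> (\<xi>, t) \<in> T"
    by (fact graph_neighbourhood)
  obtain c where "0 < c" and c: "\<And>\<xi> t. (\<xi>, t) \<in> T \<Longrightarrow> c \<le> \<bar>deriv_t \<Psi> \<xi> t\<bar>"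
    using deriv_t_bounded_away_from_zero[OF class_C T deriv_t_nonzero] by blast
  obtain G where G: "\<And>\<xi>. \<xi> \<in> \<Omega> \<Longrightarrow> \<bar>g \<xi>\<bar> \<le> G"
    using compact_imp_bounded[OF compact_continuous_image[OF g_continuous compact]]
    by (auto simp: bounded_real)
  define d where "d = min (e / 2) r"
  have "0 < d" "d \<le> r" "d < e"
    using \<open>0 < e\<close> \<open>0 < r\<close> by (auto simp: d_def)
  have "((\<lambda>\<epsilon>. \<bar>\<epsilon>\<bar> * G) \<longlongrightarrow> 0) (at (0::real))"
    by (auto intro!: tendsto_eq_intros)
  then have "\<forall>\<^sub>F \<epsilon> in at 0. \<bar>\<epsilon>\<bar> * G < c * d"
    using \<open>0 < c\<close> \<open>0 < d\<close> by (intro order_tendstoD) auto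
  then show "\<forall>\<^sub>F \<epsilon> in at 0. \<forall>\<xi>\<in>\<Omega>. dist (fe \<epsilon> \<xi>) (f \<xi>) < e"
    using solves
  proof eventually_elim
    case (elim \<epsilon>)
    have "dist (fe \<epsilon> \<xi>) (f \<xi>) < e" if "\<xi> \<in> \<Omega>" for \<xi>
    proof -
      have "\<bar>fe \<epsilon> \<xi> - f \<xi>\<bar> < d"
      proof (rule solution_close)
        show "\<xi> \<in> sphere 0 1" "0 < fe \<epsilon> \<xi>"
          using that elim on_sphere by auto
        have "(\<xi>, f \<xi> - r) \<in> T"
          using graph[OF that, of "f \<xi> - r"] \<open>0 < r\<close> by simp
        then show "d < f \<xi>"
          using T(2) \<open>d \<le> r\<close> by auto
        show "c \<le> \<bar>deriv_t \<Psi> \<xi> t\<bar>" if "\<bar>t - f \<xi>\<bar> \<le> d" for t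
          using that \<open>d \<le> r\<close> by (intro c graph \<open>\<xi> \<in> \<Omega>\<close>) linarith
        have "\<bar>\<Psi> \<xi> (fe \<epsilon> \<xi>) - \<Psi> \<xi> (f \<xi>)\<bar> = \<bar>\<epsilon>\<bar> * \<bar>g \<xi>\<bar>"
          using elim that by (simp add: abs_mult)
        also have "\<dots> \<le> \<bar>\<epsilon>\<bar> * G"
          using G[OF that] by (simp add: mult_left_mono)
        finally show "\<bar>\<Psi> \<xi> (fe \<epsilon> \<xi>) - \<Psi> \<xi> (f \<xi>)\<bar> < c * d"
          using elim by linarith
      qed (rule \<open>0 < d\<close>)
      then show ?thesis
        using \<open>d < e\<close> by (simp add: dist_real_def)
    qed
    then show ?case
      by blast
  qed
qed

lemma eventually_mean_value_point:
  obtains Z where "\<forall>\<^sub>F \<epsilon> in at 0. \<forall>\<xi>\<in>\<Omega>. \<bar>Z \<epsilon> \<xi> - f \<xi>\<bar> \<le> \<bar>fe \<epsilon> \<xi> - f \<xi>\<bar> \<and>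
      \<epsilon> * g \<xi> = (fe \<epsilon> \<xi> - f \<xi>) * deriv_t \<Psi> \<xi> (Z \<epsilon> \<xi>)"
proof -
  define P where "P \<epsilon> \<xi> z \<longleftrightarrow> \<bar>z - f \<xi>\<bar> \<le> \<bar>fe \<epsilon> \<xi> - f \<xi>\<bar> \<and>
      \<Psi> \<xi> (fe \<epsilon> \<xi>) - \<Psi> \<xi> (f \<xi>) = (fe \<epsilon> \<xi> - f \<xi>) * deriv_t \<Psi> \<xi> z" for \<epsilon> \<xi> z
  have "\<forall>\<^sub>F \<epsilon> in at 0. \<forall>\<xi>\<in>\<Omega>. \<bar>(SOME z. P \<epsilon> \<xi> z) - f \<xi>\<bar> \<le> \<bar>fe \<epsilon> \<xi> - f \<xi>\<bar> \<and>
      \<epsilon> * g \<xi> = (fe \<epsilon> \<xi> - f \<xi>) * deriv_t \<Psi> \<xi> (SOME z. P \<epsilon> \<xi> z)"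
    using solves
  proof eventually_elim
    case (elim \<epsilon>)
    show ?case
    proof
      fix \<xi> assume "\<xi> \<in> \<Omega>"
      then have "0 < fe \<epsilon> \<xi>" "0 < f \<xi>" "\<xi> \<in> sphere 0 1"
        using elim f_positive on_sphere by auto
      then have "\<exists>z. P \<epsilon> \<xi> z"
        unfolding P_def
        by (intro mean_value_between class_C_has_real_derivative[OF class_C]) auto
      from someI_ex[OF this] show "\<bar>(SOME z. P \<epsilon> \<xi> z) - f \<xi>\<bar> \<le> \<bar>fe \<epsilon> \<xi> - f \<xi>\<bar> \<and>
          \<epsilon> * g \<xi> = (fe \<epsilon> \<xi> - f \<xi>) * deriv_t \<Psi> \<xi> (SOME z. P \<epsilon> \<xi> z)"
        using elim \<open>\<xi> \<in> \<Omega>\<close> unfolding P_def by auto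
    qed
  qed
  then show ?thesis
    by (rule that)
qed

lemma uniform_limit_deriv_t_between:
  assumes Z: "\<forall>\<^sub>F \<epsilon> in at 0. \<forall>\<xi>\<in>\<Omega>. \<bar>Z \<epsilon> \<xi> - f \<xi>\<bar> \<le> \<bar>fe \<epsilon> \<xi> - f \<xi>\<bar>"
  shows "uniform_limit \<Omega> (\<lambda>\<epsilon> \<xi>. deriv_t \<Psi> \<xi> (Z \<epsilon> \<xi>)) (\<lambda>\<xi>. deriv_t \<Psi> \<xi> (f \<xi>)) (at 0)"
proof -
  obtain r T where "0 < r" and T: "compact T" "T \<subseteq> sphere 0 1 \<times> {0<..}"
    and graph: "\<And>\<xi> t. \<xi> \<in> \<Omega> \<Longrightarrow> \<bar>t - f \<xi>\<bar> \<le> r \<Longrightarrow> (\<xi>, t) \<in> T"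
    by (fact graph_neighbourhood)
  have "\<forall>\<^sub>F \<epsilon> in at 0. \<forall>\<xi>\<in>\<Omega>. dist (fe \<epsilon> \<xi>) (f \<xi>) < r"
    using uniform_limitD[OF uniform_limit_solution \<open>0 < r\<close>] .
  with Z have Z_in_T: "\<forall>\<^sub>F \<epsilon> in at 0. \<forall>\<xi>\<in>\<Omega>. (\<xi>, Z \<epsilon> \<xi>) \<in> T"
  proof eventually_elim
    case (elim \<epsilon>)
    show ?case
    proof
      fix \<xi> assume "\<xi> \<in> \<Omega>"
      with elim have "\<bar>Z \<epsilon> \<xi> - f \<xi>\<bar> \<le> r"
        by (fastforce simp: dist_real_def)
      with \<open>\<xi> \<in> \<Omega>\<close> show "(\<xi>, Z \<epsilon> \<xi>) \<in> T"
        by (rule graph)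
    qed
  qed
  have "uniform_limit \<Omega> (\<lambda>\<epsilon> \<xi>. (\<xi>, Z \<epsilon> \<xi>)) (\<lambda>\<xi>. (\<xi>, f \<xi>)) (at 0)"
    by (rule metric_uniform_limit_imp_uniform_limit[OF uniform_limit_solution])
      (use Z in \<open>eventually_elim, auto simp: dist_Pair_Pair dist_real_def\<close>)
  moreover have "uniformly_continuous_on T (\<lambda>(\<xi>, t). deriv_t \<Psi> \<xi> t)"
    using class_C T by (intro compact_uniformly_continuous) (auto simp: class_C_def intro: continuous_on_subset)
  ultimately show ?thesis
    using uniform_limit_compose_uniformly_continuous_on[OF _ _ Z_in_T compact_imp_closed[OF T(1)]]
    by fastforce
qed

lemma uniform_limit_diff_quotient:
  "uniform_limit \<Omega> (\<lambda>\<epsilon> \<xi>. (fe \<epsilon> \<xi> - f \<xi>) / \<epsilon>) (\<lambda>\<xi>. g \<xi> / deriv_t \<Psi> \<xi> (f \<xi>)) (at 0)"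
proof -
  obtain Z where Z: "\<forall>\<^sub>F \<epsilon> in at 0. \<forall>\<xi>\<in>\<Omega>. \<bar>Z \<epsilon> \<xi> - f \<xi>\<bar> \<le> \<bar>fe \<epsilon> \<xi> - f \<xi>\<bar> \<and>
      \<epsilon> * g \<xi> = (fe \<epsilon> \<xi> - f \<xi>) * deriv_t \<Psi> \<xi> (Z \<epsilon> \<xi>)"
    using eventually_mean_value_point by blast
  then have "\<forall>\<^sub>F \<epsilon> in at 0. \<forall>\<xi>\<in>\<Omega>. \<bar>Z \<epsilon> \<xi> - f \<xi>\<bar> \<le> \<bar>fe \<epsilon> \<xi> - f \<xi>\<bar>"
    by eventually_elim auto
  then have D: "uniform_limit \<Omega> (\<lambda>\<epsilon> \<xi>. deriv_t \<Psi> \<xi> (Z \<epsilon> \<xi>)) (\<lambda>\<xi>. deriv_t \<Psi> \<xi> (f \<xi>)) (at 0)"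
    by (rule uniform_limit_deriv_t_between)
  obtain r T where "0 < r" and T: "compact T" "T \<subseteq> sphere 0 1 \<times> {0<..}"
    and graph: "\<And>\<xi> t. \<xi> \<in> \<Omega> \<Longrightarrow> \<bar>t - f \<xi>\<bar> \<le> r \<Longrightarrow> (\<xi>, t) \<in> T"
    by (fact graph_neighbourhood)
  obtain c where "0 < c" and c: "\<And>\<xi> t. (\<xi>, t) \<in> T \<Longrightarrow> c \<le> \<bar>deriv_t \<Psi> \<xi> t\<bar>"
    using deriv_t_bounded_away_from_zero[OF class_C T deriv_t_nonzero] by blast
  have lower: "c \<le> \<bar>deriv_t \<Psi> \<xi> (f \<xi>)\<bar>" if "\<xi> \<in> \<Omega>" for \<xi>
    using c graph[OF that] \<open>0 < r\<close> by simp
  have "uniform_limit \<Omega> (\<lambda>\<epsilon> \<xi>. g \<xi> / deriv_t \<Psi> \<xi> (Z \<epsilon> \<xi>))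
      (\<lambda>\<xi>. g \<xi> / deriv_t \<Psi> \<xi> (f \<xi>)) (at 0)"
    using \<open>0 < c\<close> lower
    by (intro uniform_lim_divide[OF uniform_limit_const D] compact_imp_bounded
        compact_continuous_image g_continuous compact) auto
  moreover have "\<forall>\<^sub>F \<epsilon> in at (0::real). \<epsilon> \<noteq> 0"
    by (simp add: eventually_at_filter)
  with Z uniform_limitD[OF D \<open>0 < c\<close>]
  have "\<forall>\<^sub>F \<epsilon> in at 0. \<forall>\<xi>\<in>\<Omega>. g \<xi> / deriv_t \<Psi> \<xi> (Z \<epsilon> \<xi>) = (fe \<epsilon> \<xi> - f \<xi>) / \<epsilon>"
  proof eventually_elim
    case (elim \<epsilon>)
    have "deriv_t \<Psi> \<xi> (Z \<epsilon> \<xi>) \<noteq> 0" if "\<xi> \<in> \<Omega>" for \<xi>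
    proof
      assume "deriv_t \<Psi> \<xi> (Z \<epsilon> \<xi>) = 0"
      moreover have "dist (deriv_t \<Psi> \<xi> (Z \<epsilon> \<xi>)) (deriv_t \<Psi> \<xi> (f \<xi>)) < c"
        using elim that by blast
      ultimately show False
        using lower[OF that] by (simp add: dist_real_def)
    qed
    then show ?case
      using elim by (simp add: frac_eq_eq mult.commute)
  qed
  ultimately show ?thesis
    using uniform_limit_cong by fastforce
qed

end

section \<open>Logarithmic first variations of support and radial functions\<close>

lemma hull_generator_inverse:
  assumes "hull_generator \<Omega> F"
  shows "hull_generator \<Omega> (\<lambda>\<zeta>. 1 / F \<zeta>)"
  using assms unfolding hull_generator_def by (auto intro!: continuous_intros)

context hull_generator
begin

lemma tendsto_log_supp_fun_diff_quotient:
  assumes v: "v \<in> sphere 0 1 - eta (conv_hull_fun \<Omega> F)"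
    and lim: "uniform_limit \<Omega> (\<lambda>\<epsilon> \<zeta>. (Fe \<epsilon> \<zeta> - F \<zeta>) / \<epsilon>) B (at 0)"
    and B: "continuous_on \<Omega> B"
    and Fe: "\<forall>\<^sub>F \<epsilon> in at 0. continuous_on \<Omega> (Fe \<epsilon>)"
    and u: "u = radial_gauss1 (polar (conv_hull_fun \<Omega> F)) v"
  shows "((\<lambda>\<epsilon>. (ln (supp_fun (conv_hull_fun \<Omega> (Fe \<epsilon>)) v)
      - ln (supp_fun (conv_hull_fun \<Omega> F) v)) / \<epsilon>) \<longlongrightarrow> B u / F u) (at 0)"
proof -
  define H where "H = supp_fun (conv_hull_fun \<Omega> F) v"
  obtain u' where u': "u' \<in> \<Omega>" "H = F u' * (v \<bullet> u')"
    unfolding H_def using supp_fun_hull_attained by blast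
  then have "u' = u"
    unfolding u H_def using radial_gauss1_polar_hull[OF v] by simp
  with u' have "u \<in> \<Omega>" and H_eq: "H = F u * (v \<bullet> u)"
    by simp_all
  have "0 < H"
    unfolding H_def using v by (intro supp_fun_hull_pos) auto
  have bounded_inner: "bounded ((\<lambda>\<zeta>. v \<bullet> \<zeta>) ` \<Omega>)"
    by (intro compact_imp_bounded compact_continuous_image continuous_intros compact)
  have "uniform_limit \<Omega> (\<lambda>\<epsilon> \<zeta>. (Fe \<epsilon> \<zeta> - F \<zeta>) / \<epsilon> * (v \<bullet> \<zeta>)) (\<lambda>\<zeta>. B \<zeta> * (v \<bullet> \<zeta>)) (at 0)"
    using bounded_inner compact_imp_bounded[OF compact_continuous_image[OF B compact]]
    by (intro uniform_lim_mult lim uniform_limit_const)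
  then have "uniform_limit \<Omega> (\<lambda>\<epsilon> \<zeta>. (Fe \<epsilon> \<zeta> * (v \<bullet> \<zeta>) - F \<zeta> * (v \<bullet> \<zeta>)) / \<epsilon>)
      (\<lambda>\<zeta>. B \<zeta> * (v \<bullet> \<zeta>)) (at 0)"
    by (simp add: left_diff_distrib)
  then have "((\<lambda>\<epsilon>. (Sup ((\<lambda>\<zeta>. Fe \<epsilon> \<zeta> * (v \<bullet> \<zeta>)) ` \<Omega>) - F u * (v \<bullet> u)) / \<epsilon>)
      \<longlongrightarrow> B u * (v \<bullet> u)) (at 0)"
    using strict_maximizer[OF v \<open>u \<in> \<Omega>\<close>] H_eq
    by (intro tendsto_Sup_diff_quotient[OF compact _ _ \<open>u \<in> \<Omega>\<close>])
      (auto simp: H_def intro!: continuous_intros continuous B)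
  then have "((\<lambda>\<epsilon>. (supp_fun (conv_hull_fun \<Omega> (Fe \<epsilon>)) v - H) / \<epsilon>) \<longlongrightarrow> B u * (v \<bullet> u)) (at 0)"
    by (rule Lim_transform_eventually)
      (use Fe in \<open>eventually_elim, simp add: supp_fun_conv_hull_fun[OF compact nonempty] H_eq\<close>)
  then have "((\<lambda>\<epsilon>. (ln (supp_fun (conv_hull_fun \<Omega> (Fe \<epsilon>)) v) - ln H) / \<epsilon>)
      \<longlongrightarrow> B u * (v \<bullet> u) / H) (at 0)"
    by (rule tendsto_ln_diff_quotient[OF \<open>0 < H\<close>])
  moreover have "B u * (v \<bullet> u) / H = B u / F u"
    using \<open>0 < H\<close> H_eq by auto
  ultimately show ?thesis
    by (simp add: H_def)
qed

lemma ln_radial_fun_wulff: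
  assumes "\<xi> \<noteq> 0"
  shows "ln (radial_fun (wulff \<Omega> F) \<xi>) = - ln (supp_fun (conv_hull_fun \<Omega> (\<lambda>\<zeta>. 1 / F \<zeta>)) \<xi>)"
proof -
  interpret inverse: hull_generator \<Omega> "\<lambda>\<zeta>. 1 / F \<zeta>"
    by (rule hull_generator_inverse[OF hull_generator_axioms])
  show ?thesis
    using wulff_eq_polar_conv_hull_fun[OF positive] inverse.radial_fun_polar_hull[OF assms]
      inverse.supp_fun_hull_pos[OF assms]
    by (simp add: ln_div)
qed

lemma tendsto_log_radial_fun_wulff_diff_quotient:
  assumes \<xi>: "\<xi> \<in> sphere 0 1 - eta (conv_hull_fun \<Omega> (\<lambda>\<zeta>. 1 / F \<zeta>))"
    and lim: "uniform_limit \<Omega> (\<lambda>\<epsilon> \<zeta>. (Fe \<epsilon> \<zeta> - F \<zeta>) / \<epsilon>) B (at 0)"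
    and B: "continuous_on \<Omega> B"
    and Fe: "\<forall>\<^sub>F \<epsilon> in at 0. continuous_on \<Omega> (Fe \<epsilon>) \<and> (\<forall>\<zeta>\<in>\<Omega>. 0 < Fe \<epsilon> \<zeta>)"
    and u: "u = radial_gauss1 (wulff \<Omega> F) \<xi>"
  shows "((\<lambda>\<epsilon>. (ln (radial_fun (wulff \<Omega> (Fe \<epsilon>)) \<xi>)
      - ln (radial_fun (wulff \<Omega> F) \<xi>)) / \<epsilon>) \<longlongrightarrow> B u / F u) (at 0)"
proof -
  interpret inverse: hull_generator \<Omega> "\<lambda>\<zeta>. 1 / F \<zeta>"
    by (rule hull_generator_inverse[OF hull_generator_axioms])
  have "\<xi> \<noteq> 0"
    using \<xi> by auto
  obtain \<zeta>0 where "\<zeta>0 \<in> \<Omega>" "\<forall>\<zeta>\<in>\<Omega>. F \<zeta>0 \<le> F \<zeta>"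
    using continuous_attains_inf[OF compact nonempty continuous] by blast
  then have "uniform_limit \<Omega> (\<lambda>\<epsilon> \<zeta>. (1 / Fe \<epsilon> \<zeta> - 1 / F \<zeta>) / \<epsilon>) (\<lambda>\<zeta>. - B \<zeta> / (F \<zeta>)\<^sup>2) (at 0)"
    using positive
    by (intro uniform_limit_inverse_diff_quotient[OF lim, of "F \<zeta>0"] compact_imp_bounded
        compact_continuous_image compact B continuous) auto
  moreover have "continuous_on \<Omega> (\<lambda>\<zeta>. - B \<zeta> / (F \<zeta>)\<^sup>2)"
    using positive by (intro continuous_intros B continuous) auto
  moreover have "\<forall>\<^sub>F \<epsilon> in at 0. continuous_on \<Omega> (\<lambda>\<zeta>. 1 / Fe \<epsilon> \<zeta>)"
    using Fe by eventually_elim (auto intro!: continuous_intros)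
  moreover have "u = radial_gauss1 (polar (conv_hull_fun \<Omega> (\<lambda>\<zeta>. 1 / F \<zeta>))) \<xi>"
    using u wulff_eq_polar_conv_hull_fun[OF positive] by simp
  ultimately have "((\<lambda>\<epsilon>. (ln (supp_fun (conv_hull_fun \<Omega> (\<lambda>\<zeta>. 1 / Fe \<epsilon> \<zeta>)) \<xi>)
      - ln (supp_fun (conv_hull_fun \<Omega> (\<lambda>\<zeta>. 1 / F \<zeta>)) \<xi>)) / \<epsilon>)
      \<longlongrightarrow> - B u / (F u)\<^sup>2 / (1 / F u)) (at 0)"
    by (rule inverse.tendsto_log_supp_fun_diff_quotient[OF \<xi>])
  moreover have "- (- B u / (F u)\<^sup>2 / (1 / F u)) = B u / F u"
    by (cases "F u = 0") (simp_all add: power2_eq_square)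
  ultimately have "((\<lambda>\<epsilon>. - ((ln (supp_fun (conv_hull_fun \<Omega> (\<lambda>\<zeta>. 1 / Fe \<epsilon> \<zeta>)) \<xi>)
      - ln (supp_fun (conv_hull_fun \<Omega> (\<lambda>\<zeta>. 1 / F \<zeta>)) \<xi>)) / \<epsilon>)) \<longlongrightarrow> B u / F u) (at 0)"
    using tendsto_minus by fastforce
  then show ?thesis
  proof (rule Lim_transform_eventually)
    show "\<forall>\<^sub>F \<epsilon> in at 0. - ((ln (supp_fun (conv_hull_fun \<Omega> (\<lambda>\<zeta>. 1 / Fe \<epsilon> \<zeta>)) \<xi>)
      - ln (supp_fun (conv_hull_fun \<Omega> (\<lambda>\<zeta>. 1 / F \<zeta>)) \<xi>)) / \<epsilon>)
      = (ln (radial_fun (wulff \<Omega> (Fe \<epsilon>)) \<xi>) - ln (radial_fun (wulff \<Omega> F) \<xi>)) / \<epsilon>"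
      using Fe
    proof eventually_elim
      case (elim \<epsilon>)
      then interpret perturbed: hull_generator \<Omega> "Fe \<epsilon>"
        using on_sphere compact not_in_hemisphere by unfold_locales auto
      show ?case
        using perturbed.ln_radial_fun_wulff ln_radial_fun_wulff \<open>\<xi> \<noteq> 0\<close>
        by (simp add: minus_divide_left)
    qed
  qed
qed

end

theorem lemma3p3:
  fixes \<Omega> :: "'a::euclidean_space set"
    and \<Psi> :: "'a \<Rightarrow> real \<Rightarrow> real"
    and f g :: "'a \<Rightarrow> real"
    and fe :: "real \<Rightarrow> 'a \<Rightarrow> real"
  assumes dim: "DIM('a) \<ge> 2"
    and \<Omega>_sub: "\<Omega> \<subseteq> sphere 0 1"
    and \<Omega>_closed: "closed \<Omega>"
    and \<Omega>_not_hemi: "\<forall>u\<in>sphere 0 1. \<not> \<Omega> \<subseteq> {x. x \<bullet> u \<ge> 0}"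
    and \<Psi>_class: "class_C_I \<Psi> \<or> class_C_d \<Psi>"
    and f_cont: "continuous_on \<Omega> f" and f_pos: "\<forall>\<xi>\<in>\<Omega>. f \<xi> > 0"
    and g_cont: "continuous_on \<Omega> g"
    and fe_def: "\<exists>\<delta>>0. \<forall>\<epsilon>. \<bar>\<epsilon>\<bar> < \<delta> \<longrightarrow>
         continuous_on \<Omega> (fe \<epsilon>) \<and> (\<forall>\<xi>\<in>\<Omega>. fe \<epsilon> \<xi> > 0) \<and>
         (\<forall>\<xi>\<in>\<Omega>. \<Psi> \<xi> (fe \<epsilon> \<xi>) = \<Psi> \<xi> (f \<xi>) + \<epsilon> * g \<xi>)"
  shows "(\<forall>v\<in>sphere 0 1 - eta (conv_hull_fun \<Omega> f).
            let u0 = radial_gauss1 (polar (conv_hull_fun \<Omega> f)) v in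
            ((\<lambda>\<epsilon>. (ln (supp_fun (conv_hull_fun \<Omega> (fe \<epsilon>)) v)
                    - ln (supp_fun (conv_hull_fun \<Omega> f) v)) / \<epsilon>)
              \<longlongrightarrow> g u0 / (f u0 * deriv_t \<Psi> u0 (f u0))) (at 0))
       \<and> (\<forall>\<xi>\<in>sphere 0 1 - eta (conv_hull_fun \<Omega> (\<lambda>x. 1 / f x)).
            let u1 = radial_gauss1 (wulff \<Omega> f) \<xi> in
            ((\<lambda>\<epsilon>. (ln (radial_fun (wulff \<Omega> (fe \<epsilon>)) \<xi>)
                    - ln (radial_fun (wulff \<Omega> f) \<xi>)) / \<epsilon>)
              \<longlongrightarrow> g u1 / (f u1 * deriv_t \<Psi> u1 (f u1))) (at 0))"
proof -
  have "compact \<Omega>"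
    using \<Omega>_closed bounded_subset[OF bounded_sphere \<Omega>_sub] by (simp add: compact_eq_bounded_closed)
  interpret hull_generator \<Omega> f
    using \<Omega>_sub \<open>compact \<Omega>\<close> \<Omega>_not_hemi f_cont f_pos by unfold_locales auto
  have fe: "\<forall>\<^sub>F \<epsilon> in at 0. continuous_on \<Omega> (fe \<epsilon>) \<and> (\<forall>\<xi>\<in>\<Omega>. 0 < fe \<epsilon> \<xi>) \<and>
      (\<forall>\<xi>\<in>\<Omega>. \<Psi> \<xi> (fe \<epsilon> \<xi>) = \<Psi> \<xi> (f \<xi>) + \<epsilon> * g \<xi>)"
    using fe_def unfolding eventually_at by (metis dist_real_def diff_zero)
  interpret implicit_perturbation \<Omega> \<Psi> f g fe
    using \<Psi>_class \<Omega>_sub \<open>compact \<Omega>\<close> f_cont f_pos g_cont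
    by unfold_locales (use fe in \<open>auto elim: eventually_mono\<close>)
  have fe_positive: "\<forall>\<^sub>F \<epsilon> in at 0. continuous_on \<Omega> (fe \<epsilon>) \<and> (\<forall>\<xi>\<in>\<Omega>. 0 < fe \<epsilon> \<xi>)"
    using fe by eventually_elim simp
  then have fe_continuous: "\<forall>\<^sub>F \<epsilon> in at 0. continuous_on \<Omega> (fe \<epsilon>)"
    by eventually_elim simp
  show ?thesis
    unfolding Let_def
    using tendsto_log_supp_fun_diff_quotient[OF _ uniform_limit_diff_quotient
        continuous_on_first_variation fe_continuous]
      tendsto_log_radial_fun_wulff_diff_quotient[OF _ uniform_limit_diff_quotient
        continuous_on_first_variation fe_positive]
    by (simp add: mult.commute)
qed

end
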